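(* Let $G$ be a finite group, $m$ a positive integer and $n$ a positive odd integer. Then $\mathrm{Pow}(G)\cong \mathrm{Pow}\big((\prod_{i=1}^{m}\mathbb{Z}_2)\times\mathbb{Z}_n\big)$ if and only if $G\cong (\prod_{i=1}^{m}\mathbb{Z}_2)\times\mathbb{Z}_n$.
   Context: All groups are finite. $\mathbb{Z}_k$ denotes the cyclic group of order $k$, and $\prod_{i=1}^m\mathbb{Z}_2$ the direct product of $m$ copies of $\mathbb{Z}_2$. For a group $X$, the power graph $\mathrm{Pow}(X)$ is the simple graph with vertex set $X$ in which two distinct vertices $x,y$ are adjacent if and only if $y\in\langle x\rangle$ or $x\in\langle y\rangle$. *)

theory Defs
  imports "HOL-Algebra.Algebra"
begin

definition power_adj :: "('a, 'b) monoid_scheme \<Rightarrow> 'a \<Rightarrow> 'a \<Rightarrow> bool" where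
  "power_adj Gr x y \<longleftrightarrow> x \<in> carrier Gr \<and> y \<in> carrier Gr \<and> x \<noteq> y \<and>
     (y \<in> generate Gr {x} \<or> x \<in> generate Gr {y})"

definition power_graph_iso :: "('a, 'b) monoid_scheme \<Rightarrow> ('c, 'd) monoid_scheme \<Rightarrow> bool" where
  "power_graph_iso Gr Hr \<longleftrightarrow> (\<exists>f. bij_betw f (carrier Gr) (carrier Hr) \<and>
     (\<forall>x\<in>carrier Gr. \<forall>y\<in>carrier Gr. power_adj Gr x y \<longleftrightarrow> power_adj Hr (f x) (f y)))"

definition elem_Z2_times_Zn :: "nat \<Rightarrow> nat \<Rightarrow> ((nat \<Rightarrow> int) \<times> int) monoid" where
  "elem_Z2_times_Zn m n =
     product_group {..<m} (\<lambda>_. integer_mod_group 2) \<times>\<times> integer_mod_group n"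

end

theory Submission
  imports Defs
begin

text \<open>A power graph isomorphism \<open>f\<close> from \<open>G\<close> onto the power graph of
  \<open>H = (\<int>\<^sub>2)\<^sup>m \<times> \<int>\<^sub>n\<close> may be assumed to map \<open>\<one>\<close> to \<open>\<one>\<close>, both being dominating
  vertices. For \<open>a \<noteq> 0\<close> let \<open>t\<^sub>a = f\<^sup>-\<^sup>1(a, 0)\<close> and \<open>x\<^sub>a = f\<^sup>-\<^sup>1(a, 1)\<close>, and let
  \<open>K = f\<^sup>-\<^sup>1({0} \<times> \<int>\<^sub>n)\<close>. Reading off adjacencies in the power graph of \<open>H\<close>, \<open>t\<^sub>a\<close> is
  an involution, the cyclic group \<open>\<langle>x\<^sub>a\<rangle>\<close> has at most \<open>2n\<close> elements and contains \<open>t\<^sub>a\<close>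
  and \<open>K\<close>, and \<open>K\<close> consists of elements of odd order. Hence \<open>K = \<langle>x\<^sub>a\<^sup>2\<rangle>\<close> is cyclic of
  order \<open>n\<close>, and its generator \<open>c\<close> commutes with every \<open>t\<^sub>a\<close>. Finally, a group of order
  \<open>2\<^sup>m n\<close> containing an element \<open>c\<close> of odd order \<open>n\<close> and \<open>2\<^sup>m\<close> elements of order at most
  \<open>2\<close> commuting with \<open>c\<close> is the direct product of these two parts, and the involutions
  form an elementary abelian group, so \<open>G \<cong> H\<close>.\<close>

lemma (in group) generate_singleton_eq_nat_pows:
  assumes "finite (carrier G)" "x \<in> carrier G"
  shows "generate G {x} = {x [^] k | k::nat. True}"
  using generate_pow_nat[OF assms(2)] ord_ge_1[OF assms] by simp

lemma (in group) nat_pow_mem_generate_singleton: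
  assumes "x \<in> carrier G"
  shows "x [^] (k::nat) \<in> generate G {x}"
proof -
  have "x [^] int k \<in> generate G {x}" using generate_pow[OF assms] by blast
  then show ?thesis by (simp add: int_pow_int)
qed

lemma (in group) mem_generate_singleton_iff_subset:
  assumes "x \<in> carrier G" "y \<in> carrier G"
  shows "x \<in> generate G {y} \<longleftrightarrow> generate G {x} \<subseteq> generate G {y}"
  using assms generate_subgroup_incl[of "{x}" "generate G {y}"] generate_is_subgroup[of "{y}"]
    generate.incl[of x "{x}" G] by auto

lemma (in group) generate_singleton_inv:
  assumes "x \<in> carrier G"
  shows "generate G {inv x} = generate G {x}"
  using assms generate.inv[of x "{x}" G] generate.inv[of "inv x" "{inv x}" G]
    mem_generate_singleton_iff_subset[of "inv x" x] mem_generate_singleton_iff_subset[of x "inv x"]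
  by auto

lemma (in group) generate_singleton_involution:
  assumes "x \<in> carrier G" "x \<otimes> x = \<one>"
  shows "generate G {x} \<subseteq> {\<one>, x}"
proof
  fix y assume "y \<in> generate G {x}"
  then show "y \<in> {\<one>, x}"
    by induction (use assms inv_equality[of x x] in auto)
qed

lemma (in group) involution_conj_nat_pow:
  assumes t: "t \<in> carrier G" "t \<otimes> t = \<one>" and x: "x \<in> carrier G"
  shows "(t \<otimes> x \<otimes> t) [^] (j::nat) = t \<otimes> x [^] j \<otimes> t"
proof (induction j)
  case 0
  then show ?case using t by simp
next
  case (Suc j)
  have "(t \<otimes> x \<otimes> t) [^] Suc j = (t \<otimes> x [^] j \<otimes> t) \<otimes> (t \<otimes> x \<otimes> t)" using Suc by simp
  also have "\<dots> = t \<otimes> x [^] j \<otimes> (t \<otimes> t) \<otimes> x \<otimes> t" using t(1) x by (simp add: m_assoc)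
  also have "\<dots> = t \<otimes> x [^] Suc j \<otimes> t" using t x by (simp add: m_assoc)
  finally show ?case .
qed

lemma (in group) involution_in_cyclic_unique:
  assumes fin: "finite (carrier G)" and x: "x \<in> carrier G"
    and s: "s \<in> generate G {x}" "s \<otimes> s = \<one>" "s \<noteq> \<one>"
    and t: "t \<in> generate G {x}" "t \<otimes> t = \<one>" "t \<noteq> \<one>"
  shows "s = t"
proof -
  have half_ord: "2 * i = ord x" if "i \<le> ord x - 1" "x [^] i \<otimes> x [^] i = \<one>" "x [^] i \<noteq> \<one>" for i
  proof -
    have "x [^] (2 * i) = \<one>" using that(2) x by (simp add: nat_pow_mult mult_2)
    then obtain q where q: "2 * i = ord x * q" using pow_eq_id[OF x] by auto
    have "q \<noteq> 0" using q that(3) by (metis mult_0_right mult_is_0 nat_pow_0 zero_neq_numeral)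
    moreover have "ord x * q < ord x * 2" using q that(1) ord_ge_1[OF fin x] by linarith
    then have "q < 2" by simp
    ultimately show ?thesis using q by simp
  qed
  have pows: "generate G {x} = {x [^] i | i. i \<in> {0..ord x - 1}}"
    using generate_singleton_eq_nat_pows[OF fin x] ord_elems[OF fin x] by simp
  obtain i j where i: "i \<le> ord x - 1" "s = x [^] i" and j: "j \<le> ord x - 1" "t = x [^] j"
    using s(1) t(1) unfolding pows by auto
  then have "2 * i = 2 * j" using half_ord[of i] half_ord[of j] s t by simp
  then show ?thesis using i j by simp
qed

lemma power_adj_commute: "power_adj G x y \<longleftrightarrow> power_adj G y x"
  unfolding power_adj_def by auto

lemma power_adj_irrefl: "\<not> power_adj G x x"
  unfolding power_adj_def by auto

lemma (in group) power_adj_one: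
  "x \<in> carrier G \<Longrightarrow> x \<noteq> \<one> \<Longrightarrow> power_adj G \<one> x"
  unfolding power_adj_def using generate.one[of G "{x}"] by auto

lemma (in group) power_adj_cong_generate:
  assumes "u \<in> carrier G" "v \<in> carrier G" "w \<in> carrier G" "w \<noteq> u" "w \<noteq> v"
    and "generate G {u} = generate G {v}"
  shows "power_adj G u w \<longleftrightarrow> power_adj G v w"
  using assms mem_generate_singleton_iff_subset[of u w] mem_generate_singleton_iff_subset[of v w]
  unfolding power_adj_def by auto

lemma (in group) power_adj_involution_imp_mem:
  assumes "t \<otimes> t = \<one>" "y \<noteq> \<one>" "power_adj G y t"
  shows "t \<in> generate G {y}"
  using assms generate_singleton_involution[of t] unfolding power_adj_def by auto

lemma transpose_preserves_adj_dominating: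
  assumes sym: "\<And>p q. S p q \<longleftrightarrow> S q p" and irrefl: "\<And>p. \<not> S p p"
    and u: "u \<in> B" "\<And>y. y \<in> B \<Longrightarrow> y \<noteq> u \<Longrightarrow> S u y"
    and v: "v \<in> B" "\<And>y. y \<in> B \<Longrightarrow> y \<noteq> v \<Longrightarrow> S v y"
    and "p \<in> B" "q \<in> B"
  shows "S (transpose u v p) (transpose u v q) \<longleftrightarrow> S p q"
proof -
  have dom: "S a b \<longleftrightarrow> a \<noteq> b" "S b a \<longleftrightarrow> a \<noteq> b" if "a \<in> {u, v}" "b \<in> B" for a b
    using that u v irrefl sym by blast+
  have "transpose u v y \<in> B" if "y \<in> B" for y
    using that u v by (simp add: transpose_def)
  then show ?thesis
    using dom assms(7,8) by (cases "p \<in> {u, v}"; cases "q \<in> {u, v}") (auto simp: transpose_def)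
qed

lemma power_graph_iso_fixing_one:
  assumes G: "group G" and H: "group H" and "power_graph_iso G H"
  obtains f where "bij_betw f (carrier G) (carrier H)"
    and "\<And>x y. x \<in> carrier G \<Longrightarrow> y \<in> carrier G \<Longrightarrow>
           power_adj G x y \<longleftrightarrow> power_adj H (f x) (f y)"
    and "f \<one>\<^bsub>G\<^esub> = \<one>\<^bsub>H\<^esub>"
proof -
  interpret G: group G by (fact G)
  interpret H: group H by (fact H)
  obtain f0 where bij: "bij_betw f0 (carrier G) (carrier H)"
    and adj: "\<And>x y. x \<in> carrier G \<Longrightarrow> y \<in> carrier G \<Longrightarrow>
                power_adj G x y \<longleftrightarrow> power_adj H (f0 x) (f0 y)"
    using assms(3) unfolding power_graph_iso_def by blast
  have u: "f0 \<one>\<^bsub>G\<^esub> \<in> carrier H" using bij bij_betwE by blast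
  have u_dominating: "power_adj H (f0 \<one>\<^bsub>G\<^esub>) y"
    if "y \<in> carrier H" "y \<noteq> f0 \<one>\<^bsub>G\<^esub>" for y
  proof -
    have "y \<in> f0 ` carrier G" using that(1) bij by (simp add: bij_betw_def)
    then obtain x where "x \<in> carrier G" "y = f0 x" by blast
    then show ?thesis using that(2) G.power_adj_one[of x] adj[of "\<one>\<^bsub>G\<^esub>" x] by auto
  qed
  let ?f = "transpose (f0 \<one>\<^bsub>G\<^esub>) \<one>\<^bsub>H\<^esub> \<circ> f0"
  show thesis
  proof
    show "bij_betw ?f (carrier G) (carrier H)"
      using bij_betw_trans[OF bij bij_betw_transpose_iff] u by simp
    show "power_adj G x y \<longleftrightarrow> power_adj H (?f x) (?f y)"
      if "x \<in> carrier G" "y \<in> carrier G" for x y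
      using transpose_preserves_adj_dominating[OF power_adj_commute power_adj_irrefl u u_dominating
          H.one_closed H.power_adj_one, of "f0 x" "f0 y"]
        that adj[OF that] bij_betwE[OF bij] by auto
  qed simp
qed

lemma iso_imp_power_graph_iso:
  assumes G: "group G" and H: "group H" and "G \<cong> H"
  shows "power_graph_iso G H"
proof -
  obtain h where "h \<in> iso G H" using assms(3) unfolding is_iso_def by auto
  then have hom: "h \<in> hom G H" and bij: "bij_betw h (carrier G) (carrier H)"
    unfolding iso_def by auto
  interpret group_hom G H h using G H hom by (simp add: group_hom_def group_hom_axioms_def)
  have inj: "inj_on h (carrier G)" using bij bij_betw_def by blast
  have "h y \<in> generate H {h x} \<longleftrightarrow> y \<in> generate G {x}" if "x \<in> carrier G" "y \<in> carrier G" for x y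
    using generate_img[of "{x}"] that inj G.generate_incl[of "{x}"] by (auto dest: inj_onD)
  then have "power_adj G x y \<longleftrightarrow> power_adj H (h x) (h y)" if "x \<in> carrier G" "y \<in> carrier G" for x y
    using that inj bij_betwE[OF bij] unfolding power_adj_def by (auto dest: inj_onD)
  then show ?thesis unfolding power_graph_iso_def using bij by blast
qed

definition zero_vec :: "nat \<Rightarrow> nat \<Rightarrow> int" where
  "zero_vec m = (\<lambda>i\<in>{..<m}. 0)"

lemma zero_vec_mem: "zero_vec m \<in> {..<m} \<rightarrow>\<^sub>E {0..<2::int}"
  unfolding zero_vec_def by auto

lemma carrier_elem_Z2_times_Zn:
  "n > 0 \<Longrightarrow> carrier (elem_Z2_times_Zn m n) = ({..<m} \<rightarrow>\<^sub>E {0..<2}) \<times> {0..<int n}"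
  unfolding elem_Z2_times_Zn_def by (simp add: carrier_integer_mod_group)

lemma one_elem_Z2_times_Zn: "\<one>\<^bsub>elem_Z2_times_Zn m n\<^esub> = (zero_vec m, 0)"
  unfolding elem_Z2_times_Zn_def zero_vec_def by simp

lemma mult_elem_Z2_times_Zn:
  "(a, b) \<otimes>\<^bsub>elem_Z2_times_Zn m n\<^esub> (a', b') = ((\<lambda>i\<in>{..<m}. (a i + a' i) mod 2), (b + b') mod int n)"
  unfolding elem_Z2_times_Zn_def by simp

lemma group_elem_Z2_times_Zn: "group (elem_Z2_times_Zn m n)"
  unfolding elem_Z2_times_Zn_def by (intro DirProd_group product_group) auto

lemma finite_carrier_elem_Z2_times_Zn: "n > 0 \<Longrightarrow> finite (carrier (elem_Z2_times_Zn m n))"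
  by (simp add: carrier_elem_Z2_times_Zn finite_PiE)

lemma card_carrier_elem_Z2_times_Zn: "n > 0 \<Longrightarrow> card (carrier (elem_Z2_times_Zn m n)) = 2 ^ m * n"
  by (simp add: carrier_elem_Z2_times_Zn card_PiE card_cartesian_product)

lemma nat_pow_DirProd:
  "x [^]\<^bsub>G \<times>\<times> H\<^esub> (k::nat) = (fst x [^]\<^bsub>G\<^esub> k, snd x [^]\<^bsub>H\<^esub> k)"
  by (induction k) (auto simp: mult_DirProd')

lemma nat_pow_product_group:
  "x [^]\<^bsub>product_group I G\<^esub> (k::nat) = (\<lambda>i\<in>I. x i [^]\<^bsub>G i\<^esub> k)"
  by (induction k) (auto intro!: restrict_ext)

lemma nat_pow_elem_Z2_times_Zn:
  assumes "a \<in> {..<m} \<rightarrow>\<^sub>E {0..<2}"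
  shows "(a, b) [^]\<^bsub>elem_Z2_times_Zn m n\<^esub> (k::nat) =
    (if even k then zero_vec m else a, (int k * b) mod int n)"
proof -
  have "(a, b) [^]\<^bsub>elem_Z2_times_Zn m n\<^esub> k =
      ((\<lambda>i\<in>{..<m}. (int k * a i) mod 2), (int k * b) mod int n)"
    unfolding elem_Z2_times_Zn_def nat_pow_DirProd nat_pow_product_group by simp
  moreover have "(\<lambda>i\<in>{..<m}. (int k * a i) mod 2) = (if even k then zero_vec m else a)"
  proof -
    have digit: "(int k * x) mod 2 = (if even k then 0 else x)" if "x \<in> {0..<2::int}" for x
    proof -
      have "x = 0 \<or> x = 1" using that by auto
      moreover have "int k mod 2 = (if even k then 0 else 1)"
        by (cases "even k") (auto elim!: evenE oddE)
      ultimately show ?thesis by auto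
    qed
    have "a i = undefined" if "i \<notin> {..<m}" for i by (rule PiE_arb[OF assms that])
    then show ?thesis using assms unfolding zero_vec_def by (auto simp: PiE_iff digit intro!: ext)
  qed
  ultimately show ?thesis by simp
qed

text \<open>Since \<open>n\<close> is odd, the exponents \<open>k\<close> and \<open>k + n\<close> have the same effect on the
  \<open>\<int>\<^sub>n\<close>-component but opposite effects on the other one.\<close>
lemma generate_elem_Z2_times_Zn:
  assumes n: "odd n" and a: "a \<in> {..<m} \<rightarrow>\<^sub>E {0..<2}" and b: "b \<in> {0..<int n}"
  shows "generate (elem_Z2_times_Zn m n) {(a, b)} =
    {zero_vec m, a} \<times> {(int k * b) mod int n | k::nat. True}"
    (is "_ = ?R")
proof -
  interpret H: group "elem_Z2_times_Zn m n" by (rule group_elem_Z2_times_Zn)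
  have "n > 0" using n by presburger
  then have "generate (elem_Z2_times_Zn m n) {(a, b)} = {(a, b) [^]\<^bsub>elem_Z2_times_Zn m n\<^esub> k | k::nat. True}"
    using a b by (intro H.generate_singleton_eq_nat_pows finite_carrier_elem_Z2_times_Zn)
      (auto simp: carrier_elem_Z2_times_Zn)
  also have "\<dots> = ?R"
  proof
    show "?R \<subseteq> {(a, b) [^]\<^bsub>elem_Z2_times_Zn m n\<^esub> k | k::nat. True}"
    proof
      fix x assume "x \<in> ?R"
      then obtain e k where x: "x = (e, (int k * b) mod int n)" and e: "e \<in> {zero_vec m, a}"
        by auto
      define j where "j = (if (if even k then zero_vec m else a) = e then k else k + n)"
      have "even (k + n) \<longleftrightarrow> odd k" using n by simp
      then have "(if even j then zero_vec m else a) = e"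
        using e unfolding j_def by (cases "even k") auto
      moreover have "(int j * b) mod int n = (int k * b) mod int n"
        unfolding j_def by (simp add: algebra_simps)
      ultimately have "(a, b) [^]\<^bsub>elem_Z2_times_Zn m n\<^esub> j = x"
        by (simp add: nat_pow_elem_Z2_times_Zn[OF a] x)
      then show "x \<in> {(a, b) [^]\<^bsub>elem_Z2_times_Zn m n\<^esub> k | k::nat. True}" by blast
    qed
    show "{(a, b) [^]\<^bsub>elem_Z2_times_Zn m n\<^esub> k | k::nat. True} \<subseteq> ?R"
      by (auto simp: nat_pow_elem_Z2_times_Zn[OF a])
  qed
  finally show ?thesis .
qed

lemma power_adj_elem_Z2_times_Zn_fst_cases:
  assumes n: "odd n" and a: "a \<in> {..<m} \<rightarrow>\<^sub>E {0..<2}" "a \<noteq> zero_vec m" and b: "b \<in> {0..<int n}"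
    and w: "w \<in> carrier (elem_Z2_times_Zn m n)" and adj: "power_adj (elem_Z2_times_Zn m n) (a, b) w"
  shows "fst w \<in> {zero_vec m, a}"
proof -
  obtain w1 w2 where w_eq: "w = (w1, w2)" by (cases w)
  have "n > 0" using n by presburger
  then have w1: "w1 \<in> {..<m} \<rightarrow>\<^sub>E {0..<2}" and w2: "w2 \<in> {0..<int n}"
    using w w_eq by (auto simp: carrier_elem_Z2_times_Zn)
  from adj have "w \<in> generate (elem_Z2_times_Zn m n) {(a, b)} \<or> (a, b) \<in> generate (elem_Z2_times_Zn m n) {w}"
    unfolding power_adj_def by auto
  then show ?thesis
    using generate_elem_Z2_times_Zn[OF n a(1) b] generate_elem_Z2_times_Zn[OF n w1 w2] a(2) w_eq
    by auto
qed

lemma power_adj_elem_Z2_times_Zn_proj_Z2: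
  assumes n: "odd n" and a: "a \<in> {..<m} \<rightarrow>\<^sub>E {0..<2}" and b: "b \<in> {0..<int n}" "b \<noteq> 0"
  shows "power_adj (elem_Z2_times_Zn m n) (a, b) (a, 0)"
proof -
  have "(a, 0) \<in> generate (elem_Z2_times_Zn m n) {(a, b)}"
    unfolding generate_elem_Z2_times_Zn[OF n a b(1)] by (auto intro!: exI[of _ 0])
  moreover have "n > 0" using n by presburger
  ultimately show ?thesis
    unfolding power_adj_def using a b by (auto simp: carrier_elem_Z2_times_Zn)
qed

lemma power_adj_elem_Z2_times_Zn_proj_Zn:
  assumes n: "odd n" and a: "a \<in> {..<m} \<rightarrow>\<^sub>E {0..<2}" "a \<noteq> zero_vec m" and b: "b \<in> {0..<int n}"
  shows "power_adj (elem_Z2_times_Zn m n) (a, b) (zero_vec m, b)"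
proof -
  have "(zero_vec m, b) \<in> generate (elem_Z2_times_Zn m n) {(a, b)}"
    unfolding generate_elem_Z2_times_Zn[OF n a(1) b] using b by (auto intro!: exI[of _ 1])
  moreover have "n > 0" using n by presburger
  ultimately show ?thesis
    unfolding power_adj_def using a b zero_vec_mem[of m] by (auto simp: carrier_elem_Z2_times_Zn)
qed

lemma power_adj_elem_Z2_times_Zn_generator:
  assumes n: "odd n" and a: "a \<in> {..<m} \<rightarrow>\<^sub>E {0..<2}" "a \<noteq> zero_vec m" and b: "b \<in> {0..<int n}"
  shows "power_adj (elem_Z2_times_Zn m n) (a, 1 mod int n) (zero_vec m, b)"
proof -
  have "n > 0" using n by presburger
  then have one: "1 mod int n \<in> {0..<int n}" by simp
  have "b = (int (nat b) * (1 mod int n)) mod int n" using b by (simp add: mod_mult_right_eq)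
  then have "(zero_vec m, b) \<in> generate (elem_Z2_times_Zn m n) {(a, 1 mod int n)}"
    unfolding generate_elem_Z2_times_Zn[OF n a(1) one] by blast
  then show ?thesis
    unfolding power_adj_def using a b one zero_vec_mem[of m] \<open>n > 0\<close>
    by (auto simp: carrier_elem_Z2_times_Zn)
qed

lemma not_power_adj_elem_Z2_times_Zn:
  assumes n: "odd n" and a: "a \<in> {..<m} \<rightarrow>\<^sub>E {0..<2}" "a \<noteq> zero_vec m"
    and b: "b \<in> {0..<int n}" "b \<noteq> 0"
  shows "\<not> power_adj (elem_Z2_times_Zn m n) (a, 0) (zero_vec m, b)"
proof -
  have "n > 0" using n by presburger
  then have zero: "(0::int) \<in> {0..<int n}" by simp
  show ?thesis
    unfolding power_adj_def generate_elem_Z2_times_Zn[OF n a(1) zero]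
      generate_elem_Z2_times_Zn[OF n zero_vec_mem b(1)]
    using a(2) b(2) by auto
qed

lemma power_adj_elem_Z2_times_Zn_fst_eq:
  assumes n: "odd n" and a: "a \<in> {..<m} \<rightarrow>\<^sub>E {0..<2}" "a \<noteq> zero_vec m"
    and w: "w \<in> carrier (elem_Z2_times_Zn m n)" "w \<noteq> (zero_vec m, 0)"
    and adj: "power_adj (elem_Z2_times_Zn m n) (a, 0) w"
  shows "fst w = a"
proof -
  obtain w1 w2 where w_eq: "w = (w1, w2)" by (cases w)
  have "n > 0" using n by presburger
  then have w2: "w2 \<in> {0..<int n}" using w(1) w_eq by (auto simp: carrier_elem_Z2_times_Zn)
  have "(0::int) \<in> {0..<int n}" using \<open>n > 0\<close> by simp
  then have "w1 \<in> {zero_vec m, a}"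
    using power_adj_elem_Z2_times_Zn_fst_cases[OF n a _ w(1) adj] w_eq by simp
  moreover have "w1 \<noteq> zero_vec m"
  proof
    assume "w1 = zero_vec m"
    then have "w = (zero_vec m, w2)" "w2 \<noteq> 0" using w(2) w_eq by auto
    then show False using not_power_adj_elem_Z2_times_Zn[OF n a w2] adj by simp
  qed
  ultimately show ?thesis using w_eq by simp
qed

locale involutions_and_odd_cycle = group G for G :: "('a, 'b) monoid_scheme" (structure) +
  fixes T :: "'a set" and c :: 'a and m n :: nat
  assumes finite_carrier: "finite (carrier G)" and card_carrier: "card (carrier G) = 2 ^ m * n"
    and odd_n: "odd n" and c_closed: "c \<in> carrier G" and ord_c: "ord c = n"
    and T_subset: "T \<subseteq> carrier G" and one_in_T: "\<one> \<in> T" and card_T: "card T = 2 ^ m"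
    and T_involution: "\<And>t. t \<in> T \<Longrightarrow> t \<otimes> t = \<one>"
    and T_commute_c: "\<And>t. t \<in> T \<Longrightarrow> t \<otimes> c = c \<otimes> t"
begin

lemma T_closed: "t \<in> T \<Longrightarrow> t \<in> carrier G"
  using T_subset by auto

lemma inv_T: "t \<in> T \<Longrightarrow> inv t = t"
  using T_involution T_closed inv_equality by blast

lemma nat_pow_T: "t \<in> T \<Longrightarrow> t [^] (e::nat) = (if even e then \<one> else t)"
proof (induction e)
  case (Suc e)
  then show ?case using T_closed[of t] T_involution[of t] by (auto simp: nat_pow_Suc2)
qed simp

lemma T_commute_c_pow: "t \<in> T \<Longrightarrow> t \<otimes> c [^] (k::nat) = c [^] k \<otimes> t"
  using group_commutes_pow[of c t k] T_commute_c[of t] c_closed T_closed[of t] by auto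

lemma c_pow_n: "c [^] n = \<one>"
  using pow_ord_eq_1[OF c_closed] ord_c by simp

lemma c_pow_mod: "c [^] (k::nat) = c [^] (k mod n)"
proof -
  have "c [^] k = c [^] (n * (k div n) + k mod n)" by simp
  also have "\<dots> = (c [^] n) [^] (k div n) \<otimes> c [^] (k mod n)"
    using c_closed by (simp add: nat_pow_mult nat_pow_pow)
  also have "\<dots> = c [^] (k mod n)" using c_closed c_pow_n by simp
  finally show ?thesis .
qed

lemma c_pow_nat_pow_n: "(c [^] (k::nat)) [^] n = \<one>"
proof -
  have "(c [^] k) [^] n = (c [^] n) [^] k" using c_closed by (simp add: nat_pow_pow mult.commute)
  then show ?thesis using c_pow_n by simp
qed

lemma c_pow_eq_one_if_coprime:
  assumes "(c [^] (k::nat)) [^] (e::nat) = \<one>" "coprime e n"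
  shows "c [^] k = \<one>"
proof -
  have "n dvd k * e" using assms(1) c_closed pow_eq_id[OF c_closed] ord_c by (simp add: nat_pow_pow)
  then have "n dvd k" using assms(2) by (metis coprime_commute coprime_dvd_mult_left_iff)
  then show ?thesis using pow_eq_id[OF c_closed] ord_c by simp
qed

lemma c_pow_inj:
  assumes "c [^] (k::nat) = c [^] (k'::nat)" "k < n" "k' < n"
  shows "k = k'"
  using ord_inj[OF c_closed] assms ord_c unfolding inj_on_def by fastforce

lemma T_c_pow_nat_pow_n: "t \<in> T \<Longrightarrow> (t \<otimes> c [^] (k::nat)) [^] n = t"
  using pow_mult_distrib[OF T_commute_c_pow, of t k n] T_closed[of t] c_closed
    nat_pow_T[of t n] odd_n c_pow_nat_pow_n by simp

lemma T_c_pow_cancel: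
  assumes "t \<in> T" "t' \<in> T" "t \<otimes> c [^] (k::nat) = t' \<otimes> c [^] (k'::nat)"
  shows "t = t'" and "c [^] k = c [^] k'"
proof -
  show "t = t'" using T_c_pow_nat_pow_n[OF assms(1), of k] T_c_pow_nat_pow_n[OF assms(2), of k'] assms(3)
    by simp
  then show "c [^] k = c [^] k'" using assms T_closed c_closed by simp
qed

lemma T_c_pow_surj:
  assumes "g \<in> carrier G"
  obtains t k where "t \<in> T" "k < n" "g = t \<otimes> c [^] k"
proof -
  let ?\<mu> = "\<lambda>(t, k::nat). t \<otimes> c [^] k"
  have "inj_on ?\<mu> (T \<times> {..<n})"
    by (rule inj_onI) (auto dest: T_c_pow_cancel c_pow_inj)
  from card_image[OF this] have "card (?\<mu> ` (T \<times> {..<n})) = card (carrier G)"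
    using card_T card_carrier by (simp add: card_cartesian_product)
  moreover have "?\<mu> ` (T \<times> {..<n}) \<subseteq> carrier G" using T_closed c_closed by auto
  ultimately have "?\<mu> ` (T \<times> {..<n}) = carrier G" using card_subset_eq finite_carrier by blast
  then show ?thesis using assms that by force
qed

text \<open>Write \<open>t \<otimes> t' = s \<otimes> v\<close> with \<open>s \<in> T\<close> and \<open>v\<close> a power of \<open>c\<close>. Conjugation by \<open>t\<close>
  inverts \<open>t \<otimes> t'\<close>, hence also its power \<open>v\<close>; but \<open>t\<close> commutes with \<open>v\<close>, so \<open>v\<close> is an
  involution inside the cyclic group of odd order generated by \<open>c\<close>, i.e.\ \<open>v = \<one>\<close>.\<close>
lemma T_mult_closed:
  assumes t: "t \<in> T" and t': "t' \<in> T"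
  shows "t \<otimes> t' \<in> T"
proof -
  have tc: "t \<in> carrier G" "t' \<in> carrier G" using t t' T_closed by auto
  define u where "u = t \<otimes> t'"
  have u: "u \<in> carrier G" using tc u_def by simp
  obtain s k where s: "s \<in> T" "k < n" and us: "u = s \<otimes> c [^] k" by (rule T_c_pow_surj[OF u])
  define v where "v = c [^] k"
  have v: "v \<in> carrier G" using c_closed v_def by simp
  have "u [^] (n + 1) = s [^] (n + 1) \<otimes> v [^] (n + 1)"
    unfolding us v_def
    by (rule pow_mult_distrib[OF T_commute_c_pow[OF s(1)]]) (use T_closed[OF s(1)] c_closed in auto)
  also have "\<dots> = v"
    using nat_pow_T[OF s(1), of "n + 1"] odd_n c_pow_nat_pow_n[of k] v T_closed[OF s(1)]
    by (simp add: v_def nat_pow_Suc2)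
  finally have uv: "u [^] (n + 1) = v" .
  have "t \<otimes> u \<otimes> t = t' \<otimes> t"
    using tc T_involution[OF t] unfolding u_def by (simp add: m_assoc[symmetric])
  also have "\<dots> = inv u" using tc inv_T[OF t] inv_T[OF t'] unfolding u_def by (simp add: inv_mult_group)
  finally have tut: "t \<otimes> u \<otimes> t = inv u" .
  have "t \<otimes> v \<otimes> t = (t \<otimes> u \<otimes> t) [^] (n + 1)"
    by (simp only: involution_conj_nat_pow[OF tc(1) T_involution[OF t] u] uv)
  also have "\<dots> = inv v" by (simp only: tut nat_pow_inv[OF u] uv)
  finally have "t \<otimes> v \<otimes> t = inv v" .
  moreover have "t \<otimes> v \<otimes> t = v"
    using T_commute_c_pow[OF t, of k] tc v T_involution[OF t] by (simp add: v_def m_assoc)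
  ultimately have "v \<otimes> v = \<one>" using v by (metis r_inv)
  then have "(c [^] k) [^] (2::nat) = \<one>" using v by (simp add: v_def numeral_2_eq_2)
  then have "c [^] k = \<one>" using c_pow_eq_one_if_coprime[of k 2] odd_n by simp
  then show ?thesis using s us u_def T_closed[OF s(1)] by simp
qed

lemma T_commute:
  assumes "t \<in> T" "t' \<in> T"
  shows "t \<otimes> t' = t' \<otimes> t"
proof -
  have "t \<otimes> t' = inv (t \<otimes> t')" using inv_T[OF T_mult_closed[OF assms]] by simp
  also have "\<dots> = t' \<otimes> t" using assms T_closed inv_T by (simp add: inv_mult_group)
  finally show ?thesis .
qed

fun select_prod :: "(nat \<Rightarrow> 'a) \<Rightarrow> nat \<Rightarrow> (nat \<Rightarrow> int) \<Rightarrow> 'a" where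
  "select_prod g 0 a = \<one>"
| "select_prod g (Suc j) a = select_prod g j a \<otimes> (if a j = 1 then g j else \<one>)"

lemma select_prod_in_T: "(\<And>i. i < j \<Longrightarrow> g i \<in> T) \<Longrightarrow> select_prod g j a \<in> T"
  by (induction j) (auto simp: one_in_T T_mult_closed)

lemma select_prod_cong:
  "(\<And>i. i < j \<Longrightarrow> a i = a' i) \<Longrightarrow> (\<And>i. i < j \<Longrightarrow> g i = g' i) \<Longrightarrow>
    select_prod g j a = select_prod g' j a'"
  by (induction j) auto

lemma select_prod_add:
  assumes "\<And>i. i < j \<Longrightarrow> g i \<in> T"
    and "\<And>i. i < j \<Longrightarrow> a i \<in> {0..<2}" "\<And>i. i < j \<Longrightarrow> a' i \<in> {0..<2}"
  shows "select_prod g j (\<lambda>i. (a i + a' i) mod 2) = select_prod g j a \<otimes> select_prod g j a'"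
  using assms
proof (induction j)
  case (Suc j)
  let ?e = "\<lambda>x. if x = (1::int) then g j else \<one>"
  have gj: "g j \<in> T" using Suc.prems(1) by simp
  have e: "?e x \<in> T" for x using gj one_in_T by auto
  have "a j \<in> {0..<2}" "a' j \<in> {0..<2}" using Suc.prems(2,3)[of j] by simp_all
  then have e_add: "?e ((a j + a' j) mod 2) = ?e (a j) \<otimes> ?e (a' j)"
    using T_involution[OF gj] T_closed[OF gj] by auto
  define P P' where "P = select_prod g j a" and "P' = select_prod g j a'"
  have P: "P \<in> T" "P' \<in> T" unfolding P_def P'_def using select_prod_in_T Suc.prems(1) by auto
  have "select_prod g j (\<lambda>i. (a i + a' i) mod 2) = P \<otimes> P'" unfolding P_def P'_def using Suc by auto
  then have "select_prod g (Suc j) (\<lambda>i. (a i + a' i) mod 2) = (P \<otimes> P') \<otimes> (?e (a j) \<otimes> ?e (a' j))"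
    using e_add by simp
  also have "\<dots> = P \<otimes> (P' \<otimes> ?e (a j)) \<otimes> ?e (a' j)" using P e T_closed by (simp add: m_assoc)
  also have "P' \<otimes> ?e (a j) = ?e (a j) \<otimes> P'" using T_commute[OF P(2) e] .
  also have "P \<otimes> (?e (a j) \<otimes> P') \<otimes> ?e (a' j) = (P \<otimes> ?e (a j)) \<otimes> (P' \<otimes> ?e (a' j))"
    using P e T_closed by (simp add: m_assoc)
  finally show ?case unfolding P_def P'_def by simp
qed simp

text \<open>A collision between vectors that differ in the new coordinate would express the new
  generator \<open>g'\<close> as a product of the old ones.\<close>
lemma select_prod_extend_inj:
  assumes g: "\<And>i. i < j \<Longrightarrow> g i \<in> T" and inj: "inj_on (select_prod g j) ({..<j} \<rightarrow>\<^sub>E {0..<2})"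
    and g': "g' \<in> T" "g' \<notin> select_prod g j ` ({..<j} \<rightarrow>\<^sub>E {0..<2})"
  shows "inj_on (select_prod (g(j := g')) (Suc j)) ({..<Suc j} \<rightarrow>\<^sub>E {0..<2})"
proof (rule inj_onI)
  let ?A = "{..<j} \<rightarrow>\<^sub>E {0..<2::int}"
  let ?P = "\<lambda>a. select_prod g j (restrict a {..<j})"
  fix a a' assume a: "a \<in> {..<Suc j} \<rightarrow>\<^sub>E {0..<2}" and a': "a' \<in> {..<Suc j} \<rightarrow>\<^sub>E {0..<2}"
    and eq: "select_prod (g(j := g')) (Suc j) a = select_prod (g(j := g')) (Suc j) a'"
  have restr: "restrict a {..<j} \<in> ?A" "restrict a' {..<j} \<in> ?A"
    using PiE_mem[OF a] PiE_mem[OF a'] by (simp_all add: restrict_PiE_iff)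
  have P: "?P a \<in> T" "?P a' \<in> T" using select_prod_in_T[of j g] g by blast+
  have "select_prod (g(j := g')) j x = ?P x" for x by (rule select_prod_cong) auto
  then have "select_prod (g(j := g')) (Suc j) x = ?P x \<otimes> (if x j = 1 then g' else \<one>)" for x
    by simp
  then have eq': "?P a \<otimes> (if a j = 1 then g' else \<one>) = ?P a' \<otimes> (if a' j = 1 then g' else \<one>)"
    using eq by simp
  have no_collision: False if "b \<in> ?A" "b' \<in> ?A" "select_prod g j b \<otimes> g' = select_prod g j b'" for b b'
  proof -
    have Pb: "select_prod g j b \<in> T" using select_prod_in_T[of j g] g by blast
    have "g' = (select_prod g j b \<otimes> select_prod g j b) \<otimes> g'"
      using T_involution[OF Pb] T_closed[OF g'(1)] by simp
    also have "\<dots> = select_prod g j b \<otimes> select_prod g j b'"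
      using that(3) T_closed[OF Pb] T_closed[OF g'(1)] by (simp add: m_assoc)
    also have "\<dots> = select_prod g j (\<lambda>i. (b i + b' i) mod 2)"
      using select_prod_add[of j g b b'] g PiE_mem[OF that(1)] PiE_mem[OF that(2)] by simp
    also have "\<dots> = select_prod g j (\<lambda>i\<in>{..<j}. (b i + b' i) mod 2)"
      by (rule select_prod_cong) simp_all
    finally have "g' = select_prod g j (\<lambda>i\<in>{..<j}. (b i + b' i) mod 2)" .
    moreover have "(\<lambda>i\<in>{..<j}. (b i + b' i) mod 2) \<in> ?A" by (simp add: restrict_PiE_iff)
    ultimately have "g' \<in> select_prod g j ` ?A" by (rule image_eqI)
    with g'(2) show False by contradiction
  qed
  have "a j \<in> {0..<2}" "a' j \<in> {0..<2}" using PiE_mem[OF a] PiE_mem[OF a'] by simp_all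
  then have "a j = 0 \<or> a j = 1" "a' j = 0 \<or> a' j = 1" by auto
  then have "a j = a' j"
    using eq' no_collision[OF restr] no_collision[OF restr(2,1)] P T_closed by auto
  then have "?P a = ?P a'" using eq' P g'(1) T_closed by (auto split: if_splits)
  then have "restrict a {..<j} = restrict a' {..<j}" using inj restr by (simp add: inj_on_def)
  then have "\<forall>i<j. a i = a' i" by (metis lessThan_iff restrict_apply')
  then show "a = a'" using \<open>a j = a' j\<close> by (intro PiE_ext[OF a a']) (auto simp: less_Suc_eq)
qed

lemma exists_inj_select_prod:
  "j \<le> m \<Longrightarrow> \<exists>g. (\<forall>i<j. g i \<in> T) \<and> inj_on (select_prod g j) ({..<j} \<rightarrow>\<^sub>E {0..<2})"
proof (induction j)
  case 0
  have "{..<0::nat} \<rightarrow>\<^sub>E {0..<2::int} = {\<lambda>_. undefined}" by auto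
  then show ?case by auto
next
  case (Suc j)
  let ?A = "{..<j} \<rightarrow>\<^sub>E {0..<2::int}"
  obtain g where g: "\<forall>i<j. g i \<in> T" and inj: "inj_on (select_prod g j) ?A"
    using Suc by auto
  have "card (select_prod g j ` ?A) = 2 ^ j" using card_image[OF inj] by (simp add: card_PiE)
  also have "\<dots> < card T" using Suc.prems card_T by simp
  finally have "\<not> T \<subseteq> select_prod g j ` ?A"
    by (meson card_mono finite_PiE finite_imageI finite_atLeastLessThan_int finite_lessThan leD)
  then obtain g' where "g' \<in> T" "g' \<notin> select_prod g j ` ?A" by auto
  with g inj have "inj_on (select_prod (g(j := g')) (Suc j)) ({..<Suc j} \<rightarrow>\<^sub>E {0..<2})"
    by (intro select_prod_extend_inj) auto
  moreover have "\<forall>i<Suc j. (g(j := g')) i \<in> T" using g \<open>g' \<in> T\<close> by (auto simp: less_Suc_eq)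
  ultimately show ?case by blast
qed

definition embedding :: "(nat \<Rightarrow> 'a) \<Rightarrow> (nat \<Rightarrow> int) \<times> int \<Rightarrow> 'a" where
  "embedding g = (\<lambda>(a, b). select_prod g m a \<otimes> c [^] nat b)"

lemma embedding_hom:
  assumes g: "\<And>i. i < m \<Longrightarrow> g i \<in> T"
  shows "embedding g \<in> hom (elem_Z2_times_Zn m n) G"
proof (rule homI)
  let ?A = "{..<m} \<rightarrow>\<^sub>E {0..<2::int}"
  let ?\<Phi> = "select_prod g m"
  have n: "n > 0" using odd_n by presburger
  have \<Phi>: "?\<Phi> a \<in> T" for a using select_prod_in_T[of m g] g by blast
  show "embedding g x \<in> carrier G" for x
    using \<Phi> T_closed c_closed unfolding embedding_def by (auto split: prod.splits)
  fix x y assume "x \<in> carrier (elem_Z2_times_Zn m n)" "y \<in> carrier (elem_Z2_times_Zn m n)"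
  then obtain a b a' b' where xy: "x = (a, b)" "y = (a', b')"
    and a: "a \<in> ?A" "b \<in> {0..<int n}" and a': "a' \<in> ?A" "b' \<in> {0..<int n}"
    using n by (auto simp: carrier_elem_Z2_times_Zn)
  have "?\<Phi> (\<lambda>i\<in>{..<m}. (a i + a' i) mod 2) = ?\<Phi> (\<lambda>i. (a i + a' i) mod 2)"
    by (rule select_prod_cong) simp_all
  also have "\<dots> = ?\<Phi> a \<otimes> ?\<Phi> a'"
    using select_prod_add[of m g a a'] g PiE_mem[OF a(1)] PiE_mem[OF a'(1)] by simp
  finally have \<Phi>_add: "?\<Phi> (\<lambda>i\<in>{..<m}. (a i + a' i) mod 2) = ?\<Phi> a \<otimes> ?\<Phi> a'" .
  have "nat ((b + b') mod int n) = (nat b + nat b') mod n"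
    using a(2) a'(2) by (simp add: nat_mod_distrib nat_add_distrib)
  then have "embedding g (x \<otimes>\<^bsub>elem_Z2_times_Zn m n\<^esub> y) =
      (?\<Phi> a \<otimes> ?\<Phi> a') \<otimes> c [^] ((nat b + nat b') mod n)"
    unfolding xy mult_elem_Z2_times_Zn embedding_def using \<Phi>_add by simp
  also have "c [^] ((nat b + nat b') mod n) = c [^] nat b \<otimes> c [^] nat b'"
    using c_pow_mod[of "nat b + nat b'"] c_closed by (simp add: nat_pow_mult)
  also have "(?\<Phi> a \<otimes> ?\<Phi> a') \<otimes> (c [^] nat b \<otimes> c [^] nat b') =
      ?\<Phi> a \<otimes> (?\<Phi> a' \<otimes> c [^] nat b) \<otimes> c [^] nat b'"
    using \<Phi> T_closed c_closed by (simp add: m_assoc)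
  also have "?\<Phi> a' \<otimes> c [^] nat b = c [^] nat b \<otimes> ?\<Phi> a'" using T_commute_c_pow[OF \<Phi>] .
  also have "?\<Phi> a \<otimes> (c [^] nat b \<otimes> ?\<Phi> a') \<otimes> c [^] nat b' = embedding g x \<otimes> embedding g y"
    unfolding xy embedding_def using \<Phi> T_closed c_closed by (simp add: m_assoc)
  finally show "embedding g (x \<otimes>\<^bsub>elem_Z2_times_Zn m n\<^esub> y) = embedding g x \<otimes> embedding g y" .
qed

lemma embedding_inj:
  assumes g: "\<And>i. i < m \<Longrightarrow> g i \<in> T" and inj: "inj_on (select_prod g m) ({..<m} \<rightarrow>\<^sub>E {0..<2})"
  shows "inj_on (embedding g) (carrier (elem_Z2_times_Zn m n))"
proof (rule inj_onI)
  have n: "n > 0" using odd_n by presburger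
  have \<Phi>: "select_prod g m a \<in> T" for a using select_prod_in_T[of m g] g by blast
  fix x y assume "x \<in> carrier (elem_Z2_times_Zn m n)" "y \<in> carrier (elem_Z2_times_Zn m n)"
    and eq: "embedding g x = embedding g y"
  then obtain a b a' b' where xy: "x = (a, b)" "y = (a', b')"
    and a: "a \<in> {..<m} \<rightarrow>\<^sub>E {0..<2}" "b \<in> {0..<int n}"
    and a': "a' \<in> {..<m} \<rightarrow>\<^sub>E {0..<2}" "b' \<in> {0..<int n}"
    using n by (auto simp: carrier_elem_Z2_times_Zn)
  have eq': "select_prod g m a \<otimes> c [^] nat b = select_prod g m a' \<otimes> c [^] nat b'"
    using eq unfolding xy embedding_def by simp
  have "a = a'" using T_c_pow_cancel(1)[OF \<Phi> \<Phi> eq'] inj a(1) a'(1) unfolding inj_on_def by blast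
  moreover have "nat b = nat b'"
    using T_c_pow_cancel(2)[OF \<Phi> \<Phi> eq'] c_pow_inj a(2) a'(2) by auto
  then have "b = b'" using a(2) a'(2) by auto
  ultimately show "x = y" using xy by simp
qed

theorem iso_elem_Z2_times_Zn: "G \<cong> elem_Z2_times_Zn m n"
proof -
  have n: "n > 0" using odd_n by presburger
  obtain g where g: "\<forall>i<m. g i \<in> T" and inj: "inj_on (select_prod g m) ({..<m} \<rightarrow>\<^sub>E {0..<2})"
    using exists_inj_select_prod[of m] by auto
  have hom: "embedding g \<in> hom (elem_Z2_times_Zn m n) G" using embedding_hom g by blast
  have inj': "inj_on (embedding g) (carrier (elem_Z2_times_Zn m n))" using embedding_inj g inj by blast
  then have "card (embedding g ` carrier (elem_Z2_times_Zn m n)) = card (carrier G)"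
    using card_image[OF inj'] card_carrier_elem_Z2_times_Zn[OF n] card_carrier by simp
  moreover have "embedding g ` carrier (elem_Z2_times_Zn m n) \<subseteq> carrier G"
    using hom by (auto simp: hom_def)
  ultimately have "bij_betw (embedding g) (carrier (elem_Z2_times_Zn m n)) (carrier G)"
    using inj' card_subset_eq[OF finite_carrier] by (simp add: bij_betw_def)
  then have "elem_Z2_times_Zn m n \<cong> G" using hom by (auto simp: is_iso_def iso_def)
  then show ?thesis using group.iso_sym[OF group_elem_Z2_times_Zn] by blast
qed

end

locale power_graph_iso_elem_Z2_times_Zn = group G for G :: "('a, 'b) monoid_scheme" (structure) +
  fixes m n :: nat and f :: "'a \<Rightarrow> (nat \<Rightarrow> int) \<times> int"
  assumes finite_carrier: "finite (carrier G)" and odd_n: "odd n"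
    and f_bij: "bij_betw f (carrier G) (carrier (elem_Z2_times_Zn m n))"
    and f_adj: "\<And>x y. x \<in> carrier G \<Longrightarrow> y \<in> carrier G \<Longrightarrow>
      power_adj G x y \<longleftrightarrow> power_adj (elem_Z2_times_Zn m n) (f x) (f y)"
    and f_one: "f \<one> = (zero_vec m, 0)"
begin

abbreviation H :: "((nat \<Rightarrow> int) \<times> int) monoid" where "H \<equiv> elem_Z2_times_Zn m n"
abbreviation V :: "(nat \<Rightarrow> int) set" where "V \<equiv> {..<m} \<rightarrow>\<^sub>E {0..<2}"

definition f_inv :: "(nat \<Rightarrow> int) \<times> int \<Rightarrow> 'a" where
  "f_inv = inv_into (carrier G) f"

definition invol :: "(nat \<Rightarrow> int) \<Rightarrow> 'a" where
  "invol a = f_inv (a, 0)"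

definition gen :: "(nat \<Rightarrow> int) \<Rightarrow> 'a" where
  "gen a = f_inv (a, 1 mod int n)"

definition odd_part :: "'a set" where
  "odd_part = f_inv ` ({zero_vec m} \<times> {0..<int n})"

lemma n_pos: "n > 0"
  using odd_n by presburger

lemma carrier_H: "carrier H = V \<times> {0..<int n}"
  using carrier_elem_Z2_times_Zn[OF n_pos] .

lemma f_closed: "x \<in> carrier G \<Longrightarrow> f x \<in> carrier H"
  using f_bij bij_betwE by blast

lemma f_inv_closed: "h \<in> carrier H \<Longrightarrow> f_inv h \<in> carrier G"
  unfolding f_inv_def using f_bij by (metis bij_betw_def inv_into_into)

lemma f_f_inv: "h \<in> carrier H \<Longrightarrow> f (f_inv h) = h"
  unfolding f_inv_def using f_bij by (metis bij_betw_def f_inv_into_f)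

lemma f_inv_f: "x \<in> carrier G \<Longrightarrow> f_inv (f x) = x"
  unfolding f_inv_def using f_bij by (metis bij_betw_def inv_into_f_f)

lemma f_inv_one: "f_inv (zero_vec m, 0) = \<one>"
  using f_inv_f[of \<one>] f_one by simp

lemma power_adj_f_inv:
  "h \<in> carrier H \<Longrightarrow> h' \<in> carrier H \<Longrightarrow>
    power_adj G (f_inv h) (f_inv h') \<longleftrightarrow> power_adj H h h'"
  using f_adj[OF f_inv_closed f_inv_closed] f_f_inv by simp

lemma zero_vec_closed: "b \<in> {0..<int n} \<Longrightarrow> (zero_vec m, b) \<in> carrier H"
  unfolding carrier_H using zero_vec_mem by simp

lemma card_odd_part: "card odd_part = n"
proof -
  have sub: "{zero_vec m} \<times> {0..<int n} \<subseteq> carrier H" unfolding carrier_H using zero_vec_mem by blast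
  have "inj_on f_inv ({zero_vec m} \<times> {0..<int n})"
  proof (rule inj_onI)
    fix h h' assume hh': "h \<in> {zero_vec m} \<times> {0..<int n}" "h' \<in> {zero_vec m} \<times> {0..<int n}"
      and eq: "f_inv h = f_inv h'"
    have "h \<in> carrier H" "h' \<in> carrier H" using hh' sub by blast+
    then have "h = f (f_inv h)" "h' = f (f_inv h')" using f_f_inv by simp_all
    with eq show "h = h'" by simp
  qed
  from card_image[OF this] show ?thesis unfolding odd_part_def by (simp add: card_cartesian_product)
qed

context
  fixes a assumes a: "a \<in> V" "a \<noteq> zero_vec m"
begin

lemma a_zero_closed: "(a, 0) \<in> carrier H" and a_one_closed: "(a, 1 mod int n) \<in> carrier H"
  unfolding carrier_H using a(1) n_pos by simp_all

lemma invol_closed: "invol a \<in> carrier G"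
  unfolding invol_def using f_inv_closed a_zero_closed .

lemma f_invol: "f (invol a) = (a, 0)"
  unfolding invol_def using f_f_inv a_zero_closed .

lemma invol_ne_one: "invol a \<noteq> \<one>"
  using f_invol f_one a(2) by auto

lemma gen_closed: "gen a \<in> carrier G"
  unfolding gen_def using f_inv_closed a_one_closed .

text \<open>The elements \<open>invol a\<close> and \<open>inv (invol a)\<close> generate the same cyclic subgroup, so they
  have the same neighbours in the power graph; in the power graph of \<open>H\<close> no vertex
  \<open>(a, b)\<close> with \<open>b \<noteq> 0\<close> is such a twin of \<open>(a, 0)\<close>, as \<open>(zero_vec m, b)\<close> separates them.\<close>
lemma invol_involution: "invol a \<otimes> invol a = \<one>"
proof -
  let ?t = "invol a" and ?u = "inv (invol a)"
  have t: "?t \<in> carrier G" and u: "?u \<in> carrier G" using invol_closed by simp_all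
  have "?u = ?t"
  proof (rule ccontr)
    assume ne: "?u \<noteq> ?t"
    have "?u \<in> generate G {?t}" using generate.inv[of ?t "{?t}" G] by simp
    then have "power_adj G ?t ?u" using ne t u unfolding power_adj_def by auto
    then have "power_adj H (a, 0) (f ?u)" using f_adj[OF t u] f_invol by simp
    moreover have "f ?u \<noteq> (zero_vec m, 0)"
      using invol_ne_one f_one f_inv_f[OF u] f_inv_f[OF one_closed] t by (metis inv_one inv_inv)
    ultimately have "fst (f ?u) = a"
      using power_adj_elem_Z2_times_Zn_fst_eq[OF odd_n a f_closed[OF u]] by blast
    then obtain b where fu: "f ?u = (a, b)" by (metis prod.collapse)
    have b: "b \<in> {0..<int n}" using f_closed[OF u] fu by (simp add: carrier_H)
    have b0: "b \<noteq> 0" using fu f_invol ne f_inv_f[OF u] f_inv_f[OF t] by metis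
    have zb: "(zero_vec m, b) \<in> carrier H" using zero_vec_closed[OF b] .
    let ?w = "f_inv (zero_vec m, b)"
    have w: "?w \<in> carrier G" and fw: "f ?w = (zero_vec m, b)" using f_inv_closed[OF zb] f_f_inv[OF zb] .
    have "?w \<noteq> ?u" "?w \<noteq> ?t" using fw fu f_invol a(2) by auto
    moreover have "power_adj G ?u ?w"
      using f_adj[OF u w] fu fw power_adj_elem_Z2_times_Zn_proj_Zn[OF odd_n a b] by simp
    ultimately have "power_adj G ?t ?w"
      using power_adj_cong_generate[OF u t w] generate_singleton_inv[OF t] by simp
    then show False
      using f_adj[OF t w] f_invol fw not_power_adj_elem_Z2_times_Zn[OF odd_n a b b0] by simp
  qed
  then show ?thesis using r_inv[OF t] by simp
qed

lemma invol_notin_generate_odd_part: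
  assumes "k \<in> odd_part"
  shows "invol a \<notin> generate G {k}"
proof
  assume t_in: "invol a \<in> generate G {k}"
  obtain b where b: "b \<in> {0..<int n}" and k: "k = f_inv (zero_vec m, b)"
    using assms unfolding odd_part_def by auto
  have zb: "(zero_vec m, b) \<in> carrier H" using zero_vec_closed[OF b] .
  show False
  proof (cases "b = 0")
    case True
    then show False using t_in k f_inv_one generate_one invol_ne_one by simp
  next
    case False
    have "k \<noteq> invol a" using f_f_inv[OF zb] f_invol a(2) k by auto
    then have "power_adj G k (invol a)"
      using t_in k f_inv_closed[OF zb] invol_closed unfolding power_adj_def by auto
    then have "power_adj H (zero_vec m, b) (a, 0)"
      using power_adj_f_inv[OF zb a_zero_closed] k unfolding invol_def by simp
    then show False using not_power_adj_elem_Z2_times_Zn[OF odd_n a b False] power_adj_commute by metis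
  qed
qed

lemma invol_in_generate_gen: "invol a \<in> generate G {gen a}"
proof (cases "n = 1")
  case True
  then show ?thesis unfolding gen_def invol_def using generate.incl[of _ "{_}" G] by simp
next
  case False
  then have "1 \<in> {0..<int n}" "1 mod int n = 1" using n_pos by simp_all
  then have "power_adj H (a, 1 mod int n) (a, 0)"
    using power_adj_elem_Z2_times_Zn_proj_Z2[OF odd_n a(1)] by simp
  then have adj: "power_adj G (gen a) (invol a)"
    using power_adj_f_inv[OF a_one_closed a_zero_closed] unfolding gen_def invol_def by simp
  moreover have "gen a \<noteq> \<one>"
    using f_f_inv[OF a_one_closed] f_one a(2) unfolding gen_def by auto
  ultimately show ?thesis using power_adj_involution_imp_mem[OF invol_involution] by blast
qed

lemma odd_part_subset_generate_gen: "odd_part \<subseteq> generate G {gen a}"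
proof
  fix k assume k_mem: "k \<in> odd_part"
  then obtain b where b: "b \<in> {0..<int n}" and k: "k = f_inv (zero_vec m, b)"
    unfolding odd_part_def by auto
  have zb: "(zero_vec m, b) \<in> carrier H" using zero_vec_closed[OF b] .
  have kc: "k \<in> carrier G" using k f_inv_closed[OF zb] by simp
  have "power_adj G (gen a) k"
    using power_adj_elem_Z2_times_Zn_generator[OF odd_n a b] power_adj_f_inv[OF a_one_closed zb] k
    unfolding gen_def by simp
  moreover have "gen a \<notin> generate G {k}"
    using mem_generate_singleton_iff_subset[OF gen_closed kc] invol_in_generate_gen
      invol_notin_generate_odd_part[OF k_mem] by auto
  ultimately show "k \<in> generate G {gen a}" unfolding power_adj_def by auto
qed

text \<open>\<open>f\<close> maps \<open>\<langle>gen a\<rangle>\<close> injectively into \<open>{zero_vec m, a} \<times> \<int>\<^sub>n\<close>.\<close>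
lemma card_generate_gen_le: "card (generate G {gen a}) \<le> 2 * n"
proof -
  have sub: "generate G {gen a} \<subseteq> carrier G" using generate_incl[of "{gen a}"] gen_closed by simp
  have "f ` generate G {gen a} \<subseteq> {zero_vec m, a} \<times> {0..<int n}"
  proof
    fix h assume "h \<in> f ` generate G {gen a}"
    then obtain w where w: "w \<in> generate G {gen a}" "h = f w" by auto
    have wc: "w \<in> carrier G" using w sub by auto
    show "h \<in> {zero_vec m, a} \<times> {0..<int n}"
    proof (cases "w = gen a")
      case True
      then show ?thesis using w f_f_inv[OF a_one_closed] n_pos unfolding gen_def by auto
    next
      case False
      then have "power_adj G (gen a) w" using w wc gen_closed unfolding power_adj_def by auto
      then have "power_adj H (a, 1 mod int n) (f w)"
        using f_adj[OF gen_closed wc] f_f_inv[OF a_one_closed] unfolding gen_def by simp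
      moreover have "1 mod int n \<in> {0..<int n}" using n_pos by simp
      ultimately have "fst (f w) \<in> {zero_vec m, a}"
        using power_adj_elem_Z2_times_Zn_fst_cases[OF odd_n a _ f_closed[OF wc]] by blast
      then show ?thesis using f_closed[OF wc] w(2) by (simp add: carrier_H mem_Times_iff)
    qed
  qed
  moreover have "inj_on f (generate G {gen a})" using f_bij sub by (meson bij_betw_def inj_on_subset)
  ultimately have "card (generate G {gen a}) \<le> card ({zero_vec m, a} \<times> {0..<int n})"
    by (metis card_image card_mono finite_SigmaI finite.emptyI finite.insertI finite_atLeastLessThan_int)
  also have "\<dots> = 2 * n" using a by (simp add: card_cartesian_product)
  finally show ?thesis .
qed

lemma ord_invol: "ord (invol a) = 2"
proof -
  have "invol a [^] (2::nat) = \<one>" using invol_involution invol_closed by (simp add: numeral_2_eq_2)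
  then have "ord (invol a) dvd 2" using pow_eq_id[OF invol_closed] by simp
  moreover have "ord (invol a) \<noteq> 1" using ord_eq_1[OF invol_closed] invol_ne_one by simp
  moreover have "ord (invol a) \<ge> 1" using ord_ge_1[OF finite_carrier invol_closed] .
  ultimately show ?thesis using dvd_imp_le[of "ord (invol a)" 2] by linarith
qed

text \<open>An element of even order in \<open>odd_part\<close> would have an involution among its powers; inside
  the cyclic group \<open>\<langle>gen a\<rangle>\<close> this can only be \<open>invol a\<close>.\<close>
lemma odd_ord_odd_part:
  assumes k_mem: "k \<in> odd_part"
  shows "odd (ord k)"
proof
  assume even: "even (ord k)"
  have kc: "k \<in> carrier G" using k_mem odd_part_subset_generate_gen generate_incl[of "{gen a}"] gen_closed by auto
  define s where "s = k [^] (ord k div 2)"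
  have "0 < ord k div 2" "ord k div 2 < ord k" using even ord_ge_1[OF finite_carrier kc] by auto
  then have "s \<noteq> \<one>" unfolding s_def using pow_eq_id[OF kc] by (meson dvd_imp_le not_le)
  moreover have "s \<otimes> s = k [^] (ord k div 2 + ord k div 2)" unfolding s_def using kc by (simp add: nat_pow_mult)
  then have "s \<otimes> s = \<one>" using even pow_ord_eq_1[OF kc] by (simp flip: mult_2)
  moreover have "s \<in> generate G {k}" unfolding s_def using nat_pow_mem_generate_singleton[OF kc] .
  moreover have "generate G {k} \<subseteq> generate G {gen a}"
    using k_mem odd_part_subset_generate_gen mem_generate_singleton_iff_subset[OF kc gen_closed] by auto
  ultimately have "s = invol a"
    using involution_in_cyclic_unique[OF finite_carrier gen_closed _ _ _ invol_in_generate_gen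
        invol_involution invol_ne_one] by auto
  then show False using \<open>s \<in> generate G {k}\<close> invol_notin_generate_odd_part[OF k_mem] by simp
qed

text \<open>An element \<open>k\<close> of odd order \<open>r\<close> is the square of \<open>k [^] ((r + 1) div 2)\<close>.\<close>
lemma odd_part_subset_generate_gen_sq: "odd_part \<subseteq> generate G {gen a [^] (2::nat)}"
proof
  fix k assume k_mem: "k \<in> odd_part"
  have kc: "k \<in> carrier G" using k_mem odd_part_subset_generate_gen generate_incl[of "{gen a}"] gen_closed by auto
  define z where "z = k [^] ((ord k + 1) div 2)"
  have "z [^] (2::nat) = k [^] ((ord k + 1) div 2 * 2)" unfolding z_def using kc by (simp add: nat_pow_pow)
  also have "(ord k + 1) div 2 * 2 = ord k + 1" using odd_ord_odd_part[OF k_mem] by presburger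
  also have "k [^] (ord k + 1) = k" using kc by simp
  finally have kz: "k = z [^] (2::nat)" by simp
  have "z \<in> generate G {k}" unfolding z_def by (rule nat_pow_mem_generate_singleton[OF kc])
  then have "z \<in> generate G {gen a}"
    using k_mem odd_part_subset_generate_gen mem_generate_singleton_iff_subset[OF kc gen_closed] by auto
  then obtain j :: nat where "z = gen a [^] j"
    using generate_singleton_eq_nat_pows[OF finite_carrier gen_closed] by auto
  then have "k = (gen a [^] (2::nat)) [^] j" using kz gen_closed by (simp add: nat_pow_pow mult.commute)
  then show "k \<in> generate G {gen a [^] (2::nat)}" using nat_pow_mem_generate_singleton gen_closed by simp
qed

lemma ord_gen: "ord (gen a) = 2 * n" and odd_part_eq: "odd_part = generate G {gen a [^] (2::nat)}"
proof -
  let ?N = "ord (gen a)"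
  obtain j :: nat where "invol a = gen a [^] j"
    using invol_in_generate_gen generate_singleton_eq_nat_pows[OF finite_carrier gen_closed] by auto
  then have "invol a [^] ?N = gen a [^] (?N * j)" using gen_closed by (simp add: nat_pow_pow mult.commute)
  then have "invol a [^] ?N = \<one>" using pow_eq_id[OF gen_closed] by simp
  then have "even ?N" using pow_eq_id[OF invol_closed] ord_invol by simp
  then have card_sq: "card (generate G {gen a [^] (2::nat)}) = ?N div 2"
    using ord_pow_gen[OF gen_closed, of 2] generate_pow_card[of "gen a [^] (2::nat)"] gen_closed by simp
  have fin: "finite (generate G {gen a [^] (2::nat)})"
    using finite_subset[OF generate_incl finite_carrier] gen_closed by simp
  have "n \<le> ?N div 2" using card_mono[OF fin odd_part_subset_generate_gen_sq] card_odd_part card_sq by simp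
  moreover have "?N \<le> 2 * n" using card_generate_gen_le generate_pow_card[OF gen_closed] by simp
  ultimately show N: "?N = 2 * n" by linarith
  show "odd_part = generate G {gen a [^] (2::nat)}"
    using card_seteq[OF fin odd_part_subset_generate_gen_sq] card_odd_part card_sq N by simp
qed


lemma invol_commute_odd_part:
  assumes "k \<in> odd_part"
  shows "invol a \<otimes> k = k \<otimes> invol a"
proof -
  have "k \<in> generate G {gen a}" using assms odd_part_subset_generate_gen by auto
  moreover note invol_in_generate_gen
  ultimately obtain i j :: nat where "invol a = gen a [^] i" "k = gen a [^] j"
    using generate_singleton_eq_nat_pows[OF finite_carrier gen_closed] by auto
  then show ?thesis using gen_closed by (simp add: nat_pow_mult add.commute)
qed

end

theorem iso_elem_Z2_times_Zn:
  assumes "m > 0"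
  shows "G \<cong> H"
proof -
  define e :: "nat \<Rightarrow> int" where "e = (\<lambda>i\<in>{..<m}. if i = 0 then 1 else 0)"
  have e: "e \<in> V" "e \<noteq> zero_vec m"
  proof -
    show "e \<in> V" unfolding e_def by (simp add: restrict_PiE_iff)
    have "e 0 = 1" "zero_vec m 0 = 0" using assms unfolding e_def zero_vec_def by simp_all
    then show "e \<noteq> zero_vec m" by auto
  qed
  define c where "c = gen e [^] (2::nat)"
  have c_closed: "c \<in> carrier G" unfolding c_def using gen_closed[OF e] by simp
  have c_odd: "c \<in> odd_part" unfolding c_def odd_part_eq[OF e] by (rule generate.incl) simp
  have ord_c: "ord c = n" unfolding c_def using ord_pow_gen[OF gen_closed[OF e], of 2] ord_gen[OF e] by simp
  define T where "T = insert \<one> (invol ` (V - {zero_vec m}))"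
  have T_cases: "t = \<one> \<or> (\<exists>a. a \<in> V \<and> a \<noteq> zero_vec m \<and> t = invol a)" if "t \<in> T" for t
    using that unfolding T_def by blast
  have "inj_on invol (V - {zero_vec m})"
  proof (rule inj_onI)
    fix a a' assume "a \<in> V - {zero_vec m}" "a' \<in> V - {zero_vec m}" and eq: "invol a = invol a'"
    then have fa: "f (invol a) = (a, 0)" and fa': "f (invol a') = (a', 0)" using f_invol by blast+
    from eq have "f (invol a) = f (invol a')" by (rule arg_cong)
    then have "(a, 0::int) = (a', 0)" by (simp only: fa fa')
    then show "a = a'" by simp
  qed
  moreover have "\<one> \<notin> invol ` (V - {zero_vec m})"
  proof
    assume "\<one> \<in> invol ` (V - {zero_vec m})"
    then obtain a where a: "a \<in> V" "a \<noteq> zero_vec m" and eq: "\<one> = invol a" by blast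
    from invol_ne_one[OF a] eq show False by simp
  qed
  ultimately have "card T = card (V - {zero_vec m}) + 1"
    unfolding T_def by (simp add: card_image finite_PiE)
  also have "card (V - {zero_vec m}) = 2 ^ m - 1" using zero_vec_mem by (simp add: card_PiE)
  finally have card_T: "card T = 2 ^ m" by simp
  have card_G: "card (carrier G) = 2 ^ m * n"
    using bij_betw_same_card[OF f_bij] card_carrier_elem_Z2_times_Zn[OF n_pos] by simp
  interpret criterion: involutions_and_odd_cycle G T c m n
  proof
    show "T \<subseteq> carrier G" unfolding T_def using invol_closed by blast
    show "t \<otimes> t = \<one>" if "t \<in> T" for t
      using T_cases[OF that] invol_involution by auto
    show "t \<otimes> c = c \<otimes> t" if "t \<in> T" for t
      using T_cases[OF that] invol_commute_odd_part[OF _ _ c_odd] c_closed by auto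
    show "finite (carrier G)" by (fact finite_carrier)
    show "card (carrier G) = 2 ^ m * n" by (fact card_G)
    show "odd n" by (fact odd_n)
    show "c \<in> carrier G" by (fact c_closed)
    show "ord c = n" by (fact ord_c)
    show "\<one> \<in> T" unfolding T_def by simp
    show "card T = 2 ^ m" by (fact card_T)
  qed
  show ?thesis by (rule criterion.iso_elem_Z2_times_Zn)
qed

end

theorem corollary6:
  fixes G :: "('a, 'b) monoid_scheme" and m n :: nat
  assumes "group G" and "finite (carrier G)"
    and "m > 0" and "n > 0" and "odd n"
  shows "power_graph_iso G (elem_Z2_times_Zn m n) \<longleftrightarrow> G \<cong> elem_Z2_times_Zn m n"
proof
  assume "G \<cong> elem_Z2_times_Zn m n"
  then show "power_graph_iso G (elem_Z2_times_Zn m n)"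
    using iso_imp_power_graph_iso[OF assms(1) group_elem_Z2_times_Zn] by blast
next
  assume "power_graph_iso G (elem_Z2_times_Zn m n)"
  then obtain f where "bij_betw f (carrier G) (carrier (elem_Z2_times_Zn m n))"
    and "\<And>x y. x \<in> carrier G \<Longrightarrow> y \<in> carrier G \<Longrightarrow>
           power_adj G x y \<longleftrightarrow> power_adj (elem_Z2_times_Zn m n) (f x) (f y)"
    and "f \<one>\<^bsub>G\<^esub> = (zero_vec m, 0)"
    using power_graph_iso_fixing_one[OF assms(1) group_elem_Z2_times_Zn] one_elem_Z2_times_Zn by metis
  with assms interpret power_graph_iso_elem_Z2_times_Zn G m n f
    by (simp add: power_graph_iso_elem_Z2_times_Zn_def power_graph_iso_elem_Z2_times_Zn_axioms_def)
  show "G \<cong> elem_Z2_times_Zn m n" using iso_elem_Z2_times_Zn[OF \<open>m > 0\<close>] .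
qed

end
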